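(* In $\mathrm{HMF}(\mathbb{C}^2,\Gamma_W,W)$ the object $K_f$ is exceptional, i.e.\ $\mathrm{Hom}^\bullet(K_f,K_f)$ consists only of scalar multiples of the identity, in degree $0$.
   Context: Let $p,q\ge2$ be integers and $W=x^py+xy^q$. Let $L$ be the abelian group generated by $\vec x,\vec y,\vec c$ modulo $p\vec x+\vec y=\vec x+q\vec y=\vec c$; $S=\mathbb{C}[x,y]$ is $L$-graded with $\deg x=\vec x$, $\deg y=\vec y$, and $R=S/(W)$. $\mathrm{HMF}(\mathbb{C}^2,\Gamma_W,W)$ is the homotopy category of $L$-graded matrix factorisations of $W$, equivalent to $D^b(\mathrm{gr}R)/\mathrm{Perf}(\mathrm{gr}R)$, in which a finitely generated $L$-graded $R$-module is identified with its stabilisation; $\mathrm{Hom}^n(X,Y)=\mathrm{Hom}(X,Y[n])$. Let $f=x^{p-1}+y^{q-1}$ and $K_f=R/(f)$. *)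

theory Defs
  imports Complex_Main "HOL-Computational_Algebra.Polynomial"
begin

text \<open>Polynomials in C[x,y] are represented as complex poly poly:
  the outer variable is x, the inner one is y, so the coefficient of
  x^i y^j in s is coeff (coeff s i) j.\<close>

type_synonym poly2 = "complex poly poly"

definition xv :: poly2 where "xv = monom 1 1"
definition yv :: poly2 where "yv = [:[:0, 1:]:]"
definition cst :: "complex \<Rightarrow> poly2" where "cst a = [:[:a:]:]"

text \<open>The grading group L: elements are written (a,b) = a x + b y
  (x, y generate L since c = p x + y); relations: (p-1) x = (q-1) y.\<close>

type_synonym Ldeg = "int \<times> int"

definition Lrel :: "nat \<Rightarrow> nat \<Rightarrow> Ldeg \<Rightarrow> Ldeg \<Rightarrow> bool" where
  "Lrel p q u v \<longleftrightarrow> (\<exists>k::int. fst u - fst v = k * (int p - 1) \<and> snd u - snd v = - k * (int q - 1))"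

definition ladd :: "Ldeg \<Rightarrow> Ldeg \<Rightarrow> Ldeg" where "ladd u v = (fst u + fst v, snd u + snd v)"
definition lsub :: "Ldeg \<Rightarrow> Ldeg \<Rightarrow> Ldeg" where "lsub u v = (fst u - fst v, snd u - snd v)"
definition lscale :: "int \<Rightarrow> Ldeg \<Rightarrow> Ldeg" where "lscale k u = (k * fst u, k * snd u)"

definition cvec :: "nat \<Rightarrow> Ldeg" where "cvec p = (int p, 1)"

definition Wpoly :: "nat \<Rightarrow> nat \<Rightarrow> poly2" where
  "Wpoly p q = xv ^ p * yv + xv * yv ^ q"

definition fpoly :: "nat \<Rightarrow> nat \<Rightarrow> poly2" where
  "fpoly p q = xv ^ (p - 1) + yv ^ (q - 1)"

definition hom_deg :: "nat \<Rightarrow> nat \<Rightarrow> Ldeg \<Rightarrow> poly2 \<Rightarrow> bool" where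
  "hom_deg p q l s \<longleftrightarrow> (\<forall>i j. coeff (coeff s i) j \<noteq> 0 \<longrightarrow> Lrel p q (int i, int j) l)"

text \<open>Matrices over S: nat => nat => poly2, used only on index ranges.
  A graded free module is a list of generator degrees; a degree-0 map
  F -> G is a matrix M (rows: G, columns: F) with M i j homogeneous of
  degree deg(e_j) - deg(e'_i).\<close>

type_synonym mat2 = "nat \<Rightarrow> nat \<Rightarrow> poly2"

definition graded_map :: "nat \<Rightarrow> nat \<Rightarrow> Ldeg list \<Rightarrow> Ldeg list \<Rightarrow> mat2 \<Rightarrow> bool" where
  "graded_map p q gs gt M \<longleftrightarrow>
     (\<forall>i<length gt. \<forall>j<length gs. hom_deg p q (lsub (gs ! j) (gt ! i)) (M i j))"

definition mmul :: "nat \<Rightarrow> mat2 \<Rightarrow> mat2 \<Rightarrow> mat2" where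
  "mmul n A B = (\<lambda>i j. \<Sum>k<n. A i k * B k j)"

definition madd :: "mat2 \<Rightarrow> mat2 \<Rightarrow> mat2" where "madd A B = (\<lambda>i j. A i j + B i j)"
definition msub :: "mat2 \<Rightarrow> mat2 \<Rightarrow> mat2" where "msub A B = (\<lambda>i j. A i j - B i j)"
definition mneg :: "mat2 \<Rightarrow> mat2" where "mneg A = (\<lambda>i j. - A i j)"
definition mscal :: "poly2 \<Rightarrow> mat2" where "mscal a = (\<lambda>i j. if i = j then a else 0)"

definition meq :: "nat \<Rightarrow> nat \<Rightarrow> mat2 \<Rightarrow> mat2 \<Rightarrow> bool" where
  "meq m n A B \<longleftrightarrow> (\<forall>i<m. \<forall>j<n. A i j = B i j)"

text \<open>An L-graded matrix factorisation X0 --d0--> X1 --d1--> X0(c) of W.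
  Generators of X0, X1 have degrees g0, g1; the module M(l) has
  generator degrees shifted by -l.\<close>

record gmf =
  g0 :: "Ldeg list"
  g1 :: "Ldeg list"
  d0 :: mat2
  d1 :: mat2

definition twist_gens :: "Ldeg \<Rightarrow> Ldeg list \<Rightarrow> Ldeg list" where
  "twist_gens l gs = map (\<lambda>g. lsub g l) gs"

definition is_gmf :: "nat \<Rightarrow> nat \<Rightarrow> gmf \<Rightarrow> bool" where
  "is_gmf p q X \<longleftrightarrow>
     (let r = length (g0 X) in
       length (g1 X) = r \<and>
       graded_map p q (g0 X) (g1 X) (d0 X) \<and>
       graded_map p q (g1 X) (twist_gens (cvec p) (g0 X)) (d1 X) \<and>
       meq r r (mmul r (d1 X) (d0 X)) (mscal (Wpoly p q)) \<and>
       meq r r (mmul r (d0 X) (d1 X)) (mscal (Wpoly p q)))"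

definition twist :: "Ldeg \<Rightarrow> gmf \<Rightarrow> gmf" where
  "twist l X = X\<lparr>g0 := twist_gens l (g0 X), g1 := twist_gens l (g1 X)\<rparr>"

definition shift1 :: "nat \<Rightarrow> gmf \<Rightarrow> gmf" where
  "shift1 p X = \<lparr>g0 = g1 X, g1 = twist_gens (cvec p) (g0 X), d0 = mneg (d1 X), d1 = mneg (d0 X)\<rparr>"

text \<open>X[n] for n :: int, using [2] = (c): X[2k] = X(kc), X[2k+1] = X(kc)[1].\<close>
definition shiftN :: "nat \<Rightarrow> int \<Rightarrow> gmf \<Rightarrow> gmf" where
  "shiftN p n X = (if even n then twist (lscale (n div 2) (cvec p)) X
                   else shift1 p (twist (lscale (n div 2) (cvec p)) X))"

definition is_mor :: "nat \<Rightarrow> nat \<Rightarrow> gmf \<Rightarrow> gmf \<Rightarrow> mat2 \<Rightarrow> mat2 \<Rightarrow> bool" where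
  "is_mor p q X Y u0 u1 \<longleftrightarrow>
     (let rX = length (g0 X); rY = length (g0 Y) in
       graded_map p q (g0 X) (g0 Y) u0 \<and>
       graded_map p q (g1 X) (g1 Y) u1 \<and>
       meq rY rX (mmul rY (d0 Y) u0) (mmul rX u1 (d0 X)) \<and>
       meq rY rX (mmul rY (d1 Y) u1) (mmul rX u0 (d1 X)))"

definition null_htp :: "nat \<Rightarrow> nat \<Rightarrow> gmf \<Rightarrow> gmf \<Rightarrow> mat2 \<Rightarrow> mat2 \<Rightarrow> bool" where
  "null_htp p q X Y u0 u1 \<longleftrightarrow>
     (let rX = length (g0 X); rY = length (g0 Y) in
       \<exists>h0 h1.
         graded_map p q (g0 X) (twist_gens (lscale (-1) (cvec p)) (g1 Y)) h0 \<and>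
         graded_map p q (g1 X) (g0 Y) h1 \<and>
         meq rY rX u0 (madd (mmul rY (d1 Y) h0) (mmul rX h1 (d0 X))) \<and>
         meq rY rX u1 (madd (mmul rY (d0 Y) h1) (mmul rX h0 (d1 X))))"

definition homotopic :: "nat \<Rightarrow> nat \<Rightarrow> gmf \<Rightarrow> gmf \<Rightarrow> mat2 \<Rightarrow> mat2 \<Rightarrow> mat2 \<Rightarrow> mat2 \<Rightarrow> bool" where
  "homotopic p q X Y u0 u1 v0 v1 \<longleftrightarrow> null_htp p q X Y (msub u0 v0) (msub u1 v1)"

text \<open>K_f = R/(f): since W = xy f, its stabilisation is the rank one
  factorisation S(-deg f) --f--> S --xy--> S(c - deg f), with
  deg f = (p-1) x; coker d0 = S/(f).\<close>
definition Kf :: "nat \<Rightarrow> nat \<Rightarrow> gmf" where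
  "Kf p q = \<lparr>g0 = [(int p - 1, 0)], g1 = [(0, 0)],
             d0 = (\<lambda>i j. fpoly p q), d1 = (\<lambda>i j. xv * yv)\<rparr>"

end

theory Submission
  imports Defs
begin

(* K_f is the rank one factorisation S --f--> S --xy--> S, so a morphism K_f -> K_f[n] is a pair
   of polynomials. For n = 2k it is a pair (u, u) with u homogeneous of degree k c. If k = 0, u is
   a constant. If k <> 0, a monomial of degree k c is either divisible by xy or a pure power x^i,
   y^j with i >= p resp. j >= q, and in all cases it lies in the ideal (xy, f) with homogeneous
   cofactors: this is a null-homotopy. For odd n the morphism condition reads xy u0 = - u1 f;
   as f is coprime to x and to y, f divides u0, which again gives a null-homotopy. The identity is
   not null-homotopic since 1 is not in (xy, f). *)

definition monom2 :: "complex \<Rightarrow> nat \<Rightarrow> nat \<Rightarrow> poly2" where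
  "monom2 c i j = monom (monom c j) i"

abbreviation coeff2 :: "poly2 \<Rightarrow> nat \<Rightarrow> nat \<Rightarrow> complex" where
  "coeff2 s i j \<equiv> coeff (coeff s i) j"

lemma coeff2_monom2: "coeff2 (monom2 c i j) a b = (if a = i \<and> b = j then c else 0)"
  by (auto simp: monom2_def coeff_monom)

lemma monom2_mult: "monom2 a i j * monom2 b k l = monom2 (a * b) (i + k) (j + l)"
  by (simp add: monom2_def mult_monom)

lemma monom2_add: "monom2 a i j + monom2 b i j = monom2 (a + b) i j"
  by (simp add: monom2_def add_monom)

lemma monom2_0 [simp]: "monom2 0 i j = 0"
  by (simp add: monom2_def)

lemma xv_power: "xv ^ n = monom2 1 n 0"
  by (simp add: xv_def monom2_def monom_power)

lemma yv_power: "yv ^ n = monom2 1 0 n"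
  by (simp add: yv_def monom2_def monom_0 poly_const_pow monom_altdef)

lemma xv_yv_monom2: "xv * yv = monom2 1 1 1"
  using xv_power[of 1] yv_power[of 1] monom2_mult[of 1 1 0 1 0 1] by simp

lemma cst_monom2: "cst c = monom2 c 0 0"
  by (simp add: cst_def monom2_def monom_0)

lemma fpoly_monom2: "fpoly p q = monom2 1 (p - 1) 0 + monom2 1 0 (q - 1)"
  by (simp add: fpoly_def xv_power yv_power)

lemma poly2_eqI: "(\<And>i j. coeff2 a i j = coeff2 b i j) \<Longrightarrow> a = b"
  by (intro poly_eqI) auto

lemma poly2_as_sum_of_monom2:
  "s = (\<Sum>i\<le>degree s. \<Sum>j\<le>degree (coeff s i). monom2 (coeff2 s i j) i j)"
proof -
  have "s = (\<Sum>i\<le>degree s. monom (coeff s i) i)"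
    by (simp add: poly_as_sum_of_monoms)
  also have "\<dots> = (\<Sum>i\<le>degree s. \<Sum>j\<le>degree (coeff s i). monom2 (coeff2 s i j) i j)"
    unfolding monom2_def monom_sum[symmetric] poly_as_sum_of_monoms ..
  finally show ?thesis .
qed

lemma poly2_monom2_induct [case_names zero add monom2]:
  assumes "P 0" "\<And>a b. P a \<Longrightarrow> P b \<Longrightarrow> P (a + b)"
    "\<And>i j. coeff2 s i j \<noteq> 0 \<Longrightarrow> P (monom2 (coeff2 s i j) i j)"
  shows "P s"
proof -
  have sums: "P (sum F A)" if "finite A" "\<And>x. x \<in> A \<Longrightarrow> P (F x)" for F and A :: "nat set"
    using that by (induction A rule: finite_induct) (auto intro: assms(1,2))
  have "P (monom2 (coeff2 s i j) i j)" for i j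
    using assms(1,3) by (cases "coeff2 s i j = 0") auto
  hence "P (\<Sum>i\<le>degree s. \<Sum>j\<le>degree (coeff s i). monom2 (coeff2 s i j) i j)"
    by (intro sums) auto
  thus ?thesis
    using poly2_as_sum_of_monom2[of s] by simp
qed

lemma Lrel_zero_iff:
  assumes "p \<ge> 2" "q \<ge> 2"
  shows "Lrel p q (int i, int j) (0, 0) \<longleftrightarrow> i = 0 \<and> j = 0"
proof
  assume "Lrel p q (int i, int j) (0, 0)"
  then obtain m where "int i = m * (int p - 1)" "int j = - m * (int q - 1)"
    by (auto simp: Lrel_def)
  hence "0 \<le> m * (int p - 1)" "0 \<le> - m * (int q - 1)"
    by simp_all
  with assms have "m = 0"
    by (simp add: zero_le_mult_iff mult_le_0_iff)
  with \<open>int i = _\<close> \<open>int j = _\<close> show "i = 0 \<and> j = 0" by simp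
qed (auto simp: Lrel_def)

(* c = p x + y = x + q y, so the roles of x and y can be exchanged. *)
lemma Lrel_swap_cvec:
  "Lrel p q (a, b) (k * int p, k) \<Longrightarrow> Lrel q p (b, a) (k * int q, k)"
proof -
  assume "Lrel p q (a, b) (k * int p, k)"
  then obtain m where "a - k * int p = m * (int p - 1)" "b - k = - m * (int q - 1)"
    by (auto simp: Lrel_def)
  hence "b - k * int q = - (m + k) * (int q - 1) \<and> a - k = (m + k) * (int p - 1)"
    by (simp add: algebra_simps)
  thus ?thesis unfolding Lrel_def by (intro exI[of _ "- (m + k)"]) simp
qed

lemma int_mult_ge_self: "(m::int) * a = b \<Longrightarrow> m \<noteq> 0 \<Longrightarrow> 0 < a \<Longrightarrow> 0 \<le> b \<Longrightarrow> a \<le> b"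
  by (metis linorder_not_less mult_le_cancel_right1 zero_le_mult_iff zero_less_mult_iff
      int_one_le_iff_zero_less order_le_less)

lemma Lrel_cvec_x_axis:
  assumes "p \<ge> 2" "q \<ge> 2" "k \<noteq> 0" "Lrel p q (int i, 0) (k * int p, k)"
  shows "p \<le> i"
proof -
  from assms(4) obtain m where m: "int i - k * int p = m * (int p - 1)" and k: "k = m * (int q - 1)"
    by (auto simp: Lrel_def)
  have "m \<noteq> 0"
    using k assms(3) by auto
  moreover have "m * (int p * int q - 1) = int i"
    using m unfolding k by (simp add: algebra_simps)
  moreover have pq: "int p \<le> int p * int q - 1"
    using assms by simp
  ultimately have "int p * int q - 1 \<le> int i"
    using assms(1) int_mult_ge_self[of m "int p * int q - 1" "int i"] by linarith
  with pq show ?thesis by linarith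
qed

lemma Lrel_cvec_y_axis:
  "p \<ge> 2 \<Longrightarrow> q \<ge> 2 \<Longrightarrow> k \<noteq> 0 \<Longrightarrow> Lrel p q (0, int j) (k * int p, k) \<Longrightarrow> q \<le> j"
  using Lrel_cvec_x_axis[of q p k j] Lrel_swap_cvec[of p q 0 "int j" k] by simp

lemma hom_deg_0 [simp]: "hom_deg p q l 0"
  by (simp add: hom_deg_def)

lemma hom_deg_add: "hom_deg p q l a \<Longrightarrow> hom_deg p q l b \<Longrightarrow> hom_deg p q l (a + b)"
  unfolding hom_deg_def coeff_add by (metis add.right_neutral add_0)

lemma hom_degD: "hom_deg p q l a \<Longrightarrow> coeff2 a i j \<noteq> 0 \<Longrightarrow> Lrel p q (int i, int j) l"
  by (simp add: hom_deg_def)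

lemma hom_deg_monom2I:
  "int i - fst l = m * (int p - 1) \<Longrightarrow> int j - snd l = - m * (int q - 1) \<Longrightarrow>
    hom_deg p q l (monom2 c i j)"
  by (auto simp: hom_deg_def coeff2_monom2 Lrel_def)

lemma hom_deg_zero_eq_cst:
  assumes "p \<ge> 2" "q \<ge> 2" "hom_deg p q (0, 0) u"
  shows "u = cst (coeff2 u 0 0)"
proof (rule poly2_eqI)
  fix i j
  have "i = 0 \<and> j = 0" if "coeff2 u i j \<noteq> 0"
    using hom_degD[OF assms(3) that] Lrel_zero_iff[OF assms(1,2)] by blast
  thus "coeff2 u i j = coeff2 (cst (coeff2 u 0 0)) i j"
    by (auto simp: cst_monom2 coeff2_monom2)
qed

(* The cofactor degrees are k c - deg (xy) and k c - deg f: for u0 = u1 = u this is exactly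
   a null-homotopy of K_f -> K_f(k c). *)
definition xy_f_combination :: "nat \<Rightarrow> nat \<Rightarrow> int \<Rightarrow> poly2 \<Rightarrow> bool" where
  "xy_f_combination p q k u \<longleftrightarrow>
     (\<exists>h0 h1. hom_deg p q (k * int p - 1, k - 1) h0 \<and>
        hom_deg p q (k * int p - (int p - 1), k) h1 \<and> u = xv * yv * h0 + h1 * fpoly p q)"

lemma xy_f_combination_0: "xy_f_combination p q k 0"
  unfolding xy_f_combination_def by (intro exI[of _ 0]) simp

lemma xy_f_combination_add:
  assumes "xy_f_combination p q k a" "xy_f_combination p q k b"
  shows "xy_f_combination p q k (a + b)"
proof -
  obtain a0 a1 b0 b1 where
    "hom_deg p q (k * int p - 1, k - 1) a0" "hom_deg p q (k * int p - (int p - 1), k) a1"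
    "a = xv * yv * a0 + a1 * fpoly p q"
    "hom_deg p q (k * int p - 1, k - 1) b0" "hom_deg p q (k * int p - (int p - 1), k) b1"
    "b = xv * yv * b0 + b1 * fpoly p q"
    using assms unfolding xy_f_combination_def by blast
  thus ?thesis
    unfolding xy_f_combination_def
    by (intro exI[of _ "a0 + b0"] exI[of _ "a1 + b1"]) (simp add: hom_deg_add algebra_simps)
qed

lemma xy_f_combination_monom2:
  assumes "p \<ge> 2" "q \<ge> 2" "k \<noteq> 0" "Lrel p q (int i, int j) (k * int p, k)"
  shows "xy_f_combination p q k (monom2 c i j)"
proof -
  from assms(4) obtain m where mi: "int i - k * int p = m * (int p - 1)"
    and mj: "int j - k = - m * (int q - 1)"
    by (auto simp: Lrel_def)
  obtain e b where e: "p = e + 2" and b: "q = b + 2"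
    using assms(1,2) by (metis add.commute le_add_diff_inverse)
  consider (inner) a d where "i = a + 1" "j = d + 1" | (x_axis) "j = 0" | (y_axis) "i = 0"
    by (metis Suc_eq_plus1 not0_implies_Suc)
  thus ?thesis
  proof cases
    case inner
    have "hom_deg p q (k * int p - 1, k - 1) (monom2 c a d)"
      by (rule hom_deg_monom2I[where m = m]) (use mi mj inner in simp_all)
    moreover have "monom2 c i j = xv * yv * monom2 c a d + 0 * fpoly p q"
      by (simp add: inner xv_yv_monom2 monom2_mult)
    ultimately show ?thesis
      unfolding xy_f_combination_def using hom_deg_0 by blast
  next
    case x_axis
    have "p \<le> i"
      using Lrel_cvec_x_axis[OF assms(1-3)] assms(4) x_axis by simp
    then obtain a where a: "i = a + p"
      by (metis le_add_diff_inverse2)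
    have "hom_deg p q (k * int p - 1, k - 1) (monom2 (- c) a b)"
      by (rule hom_deg_monom2I[where m = "m - 1"])
        (use mi mj x_axis in \<open>simp_all add: a e b algebra_simps\<close>)
    moreover have "hom_deg p q (k * int p - (int p - 1), k) (monom2 c (a + 1) 0)"
      by (rule hom_deg_monom2I[where m = m])
        (use mi mj x_axis in \<open>simp_all add: a e b algebra_simps\<close>)
    moreover have "monom2 c i j = xv * yv * monom2 (- c) a b + monom2 c (a + 1) 0 * fpoly p q"
      by (simp add: x_axis a e b xv_yv_monom2 fpoly_monom2 monom2_mult distrib_left monom2_add)
    ultimately show ?thesis
      unfolding xy_f_combination_def by blast
  next
    case y_axis
    have "q \<le> j"
      using Lrel_cvec_y_axis[OF assms(1-3)] assms(4) y_axis by simp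
    then obtain d where d: "j = d + q"
      by (metis le_add_diff_inverse2)
    have "hom_deg p q (k * int p - 1, k - 1) (monom2 (- c) e d)"
      by (rule hom_deg_monom2I[where m = "m + 1"])
        (use mi mj y_axis in \<open>simp_all add: d e b algebra_simps\<close>)
    moreover have "hom_deg p q (k * int p - (int p - 1), k) (monom2 c 0 (d + 1))"
      by (rule hom_deg_monom2I[where m = "m + 1"])
        (use mi mj y_axis in \<open>simp_all add: d e b algebra_simps\<close>)
    moreover have "monom2 c i j = xv * yv * monom2 (- c) e d + monom2 c 0 (d + 1) * fpoly p q"
      by (simp add: y_axis d e b xv_yv_monom2 fpoly_monom2 monom2_mult distrib_left monom2_add)
    ultimately show ?thesis
      unfolding xy_f_combination_def by blast
  qed
qed

lemma hom_deg_cvec_imp_xy_f_combination: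
  assumes "p \<ge> 2" "q \<ge> 2" "k \<noteq> 0" "hom_deg p q (k * int p, k) u"
  shows "xy_f_combination p q k u"
proof (induction rule: poly2_monom2_induct[of _ u])
  case (monom2 i j)
  thus ?case
    using xy_f_combination_monom2[OF assms(1-3)] hom_degD[OF assms(4)] by blast
qed (auto intro: xy_f_combination_0 xy_f_combination_add)

lemma Wpoly_eq_xv_yv_fpoly:
  assumes "p \<ge> 1" "q \<ge> 1"
  shows "Wpoly p q = xv * yv * fpoly p q"
proof -
  have "xv ^ p = xv * xv ^ (p - 1)" "yv ^ q = yv * yv ^ (q - 1)"
    using assms by (simp_all add: power_eq_if)
  thus ?thesis
    by (simp add: Wpoly_def fpoly_def algebra_simps)
qed

lemma hom_deg_fpoly: "p \<ge> 1 \<Longrightarrow> q \<ge> 1 \<Longrightarrow> hom_deg p q (int p - 1, 0) (fpoly p q)"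
  unfolding fpoly_monom2
  by (intro hom_deg_add hom_deg_monom2I[where m = 0] hom_deg_monom2I[where m = "-1"]) simp_all

lemma hom_deg_xv_yv: "hom_deg p q (1, 1) (xv * yv)"
  unfolding xv_yv_monom2 by (rule hom_deg_monom2I[where m = 0]) simp_all

lemma is_gmf_Kf:
  assumes "p \<ge> 1" "q \<ge> 1"
  shows "is_gmf p q (Kf p q)"
  using hom_deg_fpoly[OF assms] hom_deg_xv_yv Wpoly_eq_xv_yv_fpoly[OF assms]
  by (simp add: is_gmf_def Kf_def graded_map_def meq_def mmul_def mscal_def
      twist_gens_def lsub_def cvec_def algebra_simps)

lemma one_not_in_ideal_xv_yv_fpoly:
  assumes "p \<ge> 2" "q \<ge> 2"
  shows "xv * yv * a + b * fpoly p q \<noteq> 1"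
proof
  assume "xv * yv * a + b * fpoly p q = 1"
  hence "coeff2 (xv * yv * a + b * fpoly p q) 0 0 = 1"
    by simp
  moreover have "coeff2 (fpoly p q) 0 0 = 0"
    using assms by (simp add: fpoly_monom2 coeff2_monom2)
  ultimately show False
    by (simp add: coeff_mult_0 xv_yv_monom2 coeff2_monom2)
qed

lemma fpoly_as_poly_in_x: "fpoly p q = monom 1 (p - 1) + [:monom 1 (q - 1):]"
  by (simp add: fpoly_def xv_def yv_def monom_power poly_const_pow monom_altdef)

lemma fpoly_nonzero: "p \<ge> 2 \<Longrightarrow> fpoly p q \<noteq> 0"
proof
  assume "p \<ge> 2" "fpoly p q = 0"
  hence "coeff2 (fpoly p q) (p - 1) 0 = 0" by simp
  with \<open>p \<ge> 2\<close> show False by (simp add: fpoly_monom2 coeff2_monom2)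
qed

lemma coeff2_fpoly_mult:
  "coeff2 (fpoly p q * g) a b =
     (if a < p - 1 then 0 else coeff2 g (a - (p - 1)) b) +
     (if b < q - 1 then 0 else coeff2 g a (b - (q - 1)))"
  by (simp add: fpoly_as_poly_in_x distrib_right coeff_monom_mult)

lemma fpoly_dvd_xv_mult:
  assumes "p \<ge> 2" "fpoly p q dvd xv * w"
  shows "fpoly p q dvd w"
proof -
  obtain v where v: "xv * w = fpoly p q * v"
    using assms(2) by (auto elim: dvdE)
  have "monom 1 (q - 1) * coeff v 0 = coeff (xv * w) 0"
    using assms(1) by (simp add: v coeff_mult_0 fpoly_as_poly_in_x)
  also have "\<dots> = 0"
    by (simp add: coeff_mult_0 xv_def monom_altdef)
  finally have "poly v 0 = 0"
    by (simp add: poly_0_coeff_0)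
  then obtain v' where v': "v = xv * v'"
    using dvd_iff_poly_eq_0[of 0 v] by (auto simp: xv_def monom_altdef elim: dvdE)
  have "xv * w = xv * (fpoly p q * v')"
    by (simp add: v v' algebra_simps)
  hence "w = fpoly p q * v'"
    by (simp add: xv_def)
  thus ?thesis by simp
qed

lemma fpoly_dvd_yv_mult:
  assumes "q \<ge> 2" "fpoly p q dvd yv * w"
  shows "fpoly p q dvd w"
proof -
  obtain v where v: "yv * w = fpoly p q * v"
    using assms(2) by (auto elim: dvdE)
  have "[:0, 1:] dvd coeff v m" for m
  proof -
    have "poly (coeff (fpoly p q * v) (m + (p - 1))) 0 = poly (coeff (yv * w) (m + (p - 1))) 0"
      by (simp add: v)
    hence "poly (coeff v m) 0 = 0"
      using assms(1)
      by (simp add: yv_def fpoly_as_poly_in_x distrib_right coeff_monom_mult poly_monom power_0_left)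
    thus ?thesis
      using dvd_iff_poly_eq_0[of 0 "coeff v m"] by simp
  qed
  hence "yv dvd v"
    by (simp add: yv_def const_poly_dvd_iff)
  then obtain v' where v': "v = yv * v'"
    by (elim dvdE)
  have "yv * w = yv * (fpoly p q * v')"
    by (simp add: v v' algebra_simps)
  moreover have "yv \<noteq> 0"
    by (simp add: yv_def)
  ultimately have "w = fpoly p q * v'"
    by simp
  thus ?thesis by simp
qed

lemma Lrel_cancel_relation:
  "Lrel p q (a + (int p - 1), b - (int q - 1)) l \<Longrightarrow> Lrel p q (a, b) l"
proof -
  assume "Lrel p q (a + (int p - 1), b - (int q - 1)) l"
  then obtain k where "a + (int p - 1) - fst l = k * (int p - 1)"
    and "b - (int q - 1) - snd l = - k * (int q - 1)"
    by (auto simp: Lrel_def)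
  hence "a - fst l = (k - 1) * (int p - 1) \<and> b - snd l = - (k - 1) * (int q - 1)"
    by (simp add: algebra_simps)
  thus ?thesis
    unfolding Lrel_def fst_conv snd_conv by blast
qed

lemma hom_deg_fpoly_mult_cancel:
  assumes "p \<ge> 2" "q \<ge> 2" "hom_deg p q (int p - 1 + fst l, snd l) (fpoly p q * g)"
  shows "hom_deg p q l g"
proof (rule ccontr)
  \<comment> \<open>A wrong-degree monomial of g of maximal x-degree survives in f g, times x^(p-1).\<close>
  define bad where "bad = {i. \<exists>j. coeff2 g i j \<noteq> 0 \<and> \<not> Lrel p q (int i, int j) l}"
  assume "\<not> hom_deg p q l g"
  hence "bad \<noteq> {}"
    unfolding bad_def hom_deg_def by auto
  moreover have "finite bad"
    by (rule finite_subset[of _ "{..degree g}"]) (auto simp: bad_def intro: le_degree)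
  ultimately have "Max bad \<in> bad" by simp
  then obtain i j where i: "i = Max bad"
    and ij: "coeff2 g i j \<noteq> 0" "\<not> Lrel p q (int i, int j) l"
    unfolding bad_def by auto
  have int_shift: "int (i + (p - 1)) = int i + (int p - 1)"
    using assms(1) by simp
  have "coeff2 g (i + (p - 1)) (j - (q - 1)) = 0" if "q - 1 \<le> j"
  proof (rule ccontr)
    assume nz: "coeff2 g (i + (p - 1)) (j - (q - 1)) \<noteq> 0"
    have "i + (p - 1) \<notin> bad"
      using Max_ge[OF \<open>finite bad\<close>, of "i + (p - 1)"] i assms(1) by auto
    with nz have "Lrel p q (int (i + (p - 1)), int (j - (q - 1))) l"
      unfolding bad_def by auto
    moreover have "int (j - (q - 1)) = int j - (int q - 1)"
      using that assms(2) by simp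
    ultimately have "Lrel p q (int i, int j) l"
      using Lrel_cancel_relation int_shift by metis
    with ij show False by simp
  qed
  hence "coeff2 (fpoly p q * g) (i + (p - 1)) j = coeff2 g i j"
    by (simp add: coeff2_fpoly_mult)
  with ij have "coeff2 (fpoly p q * g) (i + (p - 1)) j \<noteq> 0"
    by simp
  from hom_degD[OF assms(3) this]
  have "Lrel p q (int (i + (p - 1)), int j) (int p - 1 + fst l, snd l)" .
  hence "Lrel p q (int i, int j) l"
    unfolding int_shift by (simp add: Lrel_def algebra_simps)
  with ij show False by simp
qed

lemma factor_through_fpoly:
  assumes "p \<ge> 2" "q \<ge> 2" "hom_deg p q (int p - 1 + fst l, snd l) u0"
    and "xv * yv * u0 = - (u1 * fpoly p q)"
  shows "\<exists>g. hom_deg p q l g \<and> u0 = g * fpoly p q \<and> u1 = - (xv * yv * g)"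
proof -
  have "xv * (yv * u0) = fpoly p q * (- u1)"
    using assms(4) by (simp add: algebra_simps)
  hence "fpoly p q dvd u0"
    using fpoly_dvd_xv_mult[OF assms(1)] fpoly_dvd_yv_mult[OF assms(2)] by (metis dvd_triv_left)
  then obtain g where g: "u0 = g * fpoly p q"
    by (metis dvd_def mult.commute)
  have "fpoly p q * u1 = fpoly p q * - (xv * yv * g)"
    using assms(4) by (simp add: g algebra_simps)
  hence "u1 = - (xv * yv * g)"
    using fpoly_nonzero[OF assms(1)] mult_left_cancel by blast
  moreover have "hom_deg p q l g"
    using hom_deg_fpoly_mult_cancel[OF assms(1,2)] assms(3) by (simp add: g mult.commute)
  ultimately show ?thesis
    using g by blast
qed

lemma shiftN_0 [simp]: "shiftN p 0 X = X"
  by (simp add: shiftN_def twist_def twist_gens_def lscale_def lsub_def)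

lemma is_mor_Kf_shiftN_even:
  assumes "even n" "p \<ge> 2"
  shows "is_mor p q (Kf p q) (shiftN p n (Kf p q)) u0 u1 \<longleftrightarrow>
    hom_deg p q (n div 2 * int p, n div 2) (u0 0 0) \<and> u1 0 0 = u0 0 0"
  using assms fpoly_nonzero[OF assms(2)]
  by (auto simp: is_mor_def Kf_def shiftN_def twist_def twist_gens_def graded_map_def meq_def mmul_def
      lscale_def lsub_def cvec_def mult.commute)

lemma null_htp_Kf_shiftN_even:
  assumes "even n" "u1 0 0 = u0 0 0"
  shows "null_htp p q (Kf p q) (shiftN p n (Kf p q)) u0 u1 \<longleftrightarrow>
    xy_f_combination p q (n div 2) (u0 0 0)"
proof
  assume "null_htp p q (Kf p q) (shiftN p n (Kf p q)) u0 u1"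
  then obtain h0 h1 where
    "hom_deg p q (n div 2 * int p - 1, n div 2 - 1) (h0 0 0)"
    "hom_deg p q (n div 2 * int p - (int p - 1), n div 2) (h1 0 0)"
    "u0 0 0 = xv * yv * h0 0 0 + h1 0 0 * fpoly p q"
    using assms(1)
    by (auto simp: null_htp_def Kf_def shiftN_def twist_def twist_gens_def graded_map_def
        meq_def mmul_def madd_def lscale_def lsub_def cvec_def ac_simps)
  thus "xy_f_combination p q (n div 2) (u0 0 0)"
    unfolding xy_f_combination_def by blast
next
  assume "xy_f_combination p q (n div 2) (u0 0 0)"
  then obtain h0 h1 where
    "hom_deg p q (n div 2 * int p - 1, n div 2 - 1) h0"
    "hom_deg p q (n div 2 * int p - (int p - 1), n div 2) h1"
    "u0 0 0 = xv * yv * h0 + h1 * fpoly p q"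
    unfolding xy_f_combination_def by blast
  thus "null_htp p q (Kf p q) (shiftN p n (Kf p q)) u0 u1"
    using assms unfolding null_htp_def Let_def
    by (intro exI[of _ "\<lambda>_ _. h0"] exI[of _ "\<lambda>_ _. h1"])
      (auto simp: Kf_def shiftN_def twist_def twist_gens_def graded_map_def meq_def mmul_def
        madd_def lscale_def lsub_def cvec_def ac_simps)
qed

lemma is_mor_Kf_shiftN_odd:
  assumes "odd n" "is_mor p q (Kf p q) (shiftN p n (Kf p q)) u0 u1"
  shows "hom_deg p q (int p - 1 + n div 2 * int p, n div 2) (u0 0 0)"
    and "xv * yv * u0 0 0 = - (u1 0 0 * fpoly p q)"
  using assms
  by (auto simp: is_mor_def Kf_def shiftN_def shift1_def twist_def twist_gens_def graded_map_def
      meq_def mmul_def mneg_def lscale_def lsub_def cvec_def algebra_simps)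

lemma null_htp_Kf_shiftN_odd:
  assumes "odd n" "hom_deg p q (n div 2 * int p, n div 2) g"
    and "u0 0 0 = g * fpoly p q" "u1 0 0 = - (xv * yv * g)"
  shows "null_htp p q (Kf p q) (shiftN p n (Kf p q)) u0 u1"
  using assms unfolding null_htp_def Let_def
  by (intro exI[of _ "\<lambda>_ _. 0"] exI[of _ "\<lambda>_ _. g"])
    (auto simp: Kf_def shiftN_def shift1_def twist_def twist_gens_def graded_map_def meq_def mmul_def
      madd_def mneg_def lscale_def lsub_def cvec_def)

lemma Kf_id_not_null_htp:
  assumes "p \<ge> 2" "q \<ge> 2"
  shows "\<not> null_htp p q (Kf p q) (Kf p q) (mscal 1) (mscal 1)"
  using null_htp_Kf_shiftN_even[of 0 "mscal 1" "mscal 1" p q] one_not_in_ideal_xv_yv_fpoly[OF assms]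
  by (auto simp: mscal_def xy_f_combination_def)

lemma Kf_endomorphism_homotopic_scalar:
  assumes "p \<ge> 2" "q \<ge> 2" "is_mor p q (Kf p q) (Kf p q) u0 u1"
  shows "\<exists>a. homotopic p q (Kf p q) (Kf p q) u0 u1 (mscal (cst a)) (mscal (cst a))"
proof -
  have "hom_deg p q (0, 0) (u0 0 0)" "u1 0 0 = u0 0 0"
    using is_mor_Kf_shiftN_even[of 0 p q u0 u1] assms by simp_all
  then obtain a where "u0 0 0 = cst a" "u1 0 0 = cst a"
    using hom_deg_zero_eq_cst[OF assms(1,2)] by metis
  hence "null_htp p q (Kf p q) (shiftN p 0 (Kf p q))
      (msub u0 (mscal (cst a))) (msub u1 (mscal (cst a)))"
    using null_htp_Kf_shiftN_even[of 0] xy_f_combination_0 by (simp add: msub_def mscal_def)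
  thus ?thesis
    unfolding homotopic_def by auto
qed

lemma Kf_even_shift_null_htp:
  assumes "p \<ge> 2" "q \<ge> 2" "even n" "n \<noteq> 0"
    and "is_mor p q (Kf p q) (shiftN p n (Kf p q)) u0 u1"
  shows "null_htp p q (Kf p q) (shiftN p n (Kf p q)) u0 u1"
proof -
  have "hom_deg p q (n div 2 * int p, n div 2) (u0 0 0)" "u1 0 0 = u0 0 0"
    using is_mor_Kf_shiftN_even[OF assms(3,1)] assms(5) by simp_all
  moreover have "n div 2 \<noteq> 0"
    using assms(3,4) by auto
  ultimately show ?thesis
    using hom_deg_cvec_imp_xy_f_combination[OF assms(1,2)] null_htp_Kf_shiftN_even[OF assms(3)]
    by simp
qed

lemma Kf_odd_shift_null_htp:
  assumes "p \<ge> 2" "q \<ge> 2" "odd n" "is_mor p q (Kf p q) (shiftN p n (Kf p q)) u0 u1"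
  shows "null_htp p q (Kf p q) (shiftN p n (Kf p q)) u0 u1"
proof -
  obtain g where "hom_deg p q (n div 2 * int p, n div 2) g"
    "u0 0 0 = g * fpoly p q" "u1 0 0 = - (xv * yv * g)"
    using factor_through_fpoly[OF assms(1,2)] is_mor_Kf_shiftN_odd[OF assms(3,4)] by fastforce
  thus ?thesis
    using null_htp_Kf_shiftN_odd[OF assms(3)] by blast
qed

theorem lemma2p6:
  fixes p q :: nat
  assumes "p \<ge> 2" and "q \<ge> 2"
  shows "is_gmf p q (Kf p q) \<and>
    (\<forall>n::int. \<forall>u0 u1. is_mor p q (Kf p q) (shiftN p n (Kf p q)) u0 u1 \<longrightarrow>
       (if n = 0 then (\<exists>a::complex. homotopic p q (Kf p q) (Kf p q) u0 u1 (mscal (cst a)) (mscal (cst a)))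
        else null_htp p q (Kf p q) (shiftN p n (Kf p q)) u0 u1)) \<and>
    \<not> null_htp p q (Kf p q) (Kf p q) (mscal 1) (mscal 1)"
proof (intro conjI allI impI)
  show "is_gmf p q (Kf p q)"
    using assms by (intro is_gmf_Kf) simp_all
  show "\<not> null_htp p q (Kf p q) (Kf p q) (mscal 1) (mscal 1)"
    using Kf_id_not_null_htp[OF assms] .
  fix n :: int and u0 u1
  assume "is_mor p q (Kf p q) (shiftN p n (Kf p q)) u0 u1"
  thus "if n = 0 then \<exists>a. homotopic p q (Kf p q) (Kf p q) u0 u1 (mscal (cst a)) (mscal (cst a))
        else null_htp p q (Kf p q) (shiftN p n (Kf p q)) u0 u1"
    using Kf_endomorphism_homotopic_scalar[OF assms] Kf_even_shift_null_htp[OF assms]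
      Kf_odd_shift_null_htp[OF assms]
    by (cases "even n") auto
qed

end
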